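(* Let $a_{n,0}$ denote the number of matchings of size $n$ with no occurrence of the endhered pattern $21$. Then $a_{1,0}=1$, $a_{2,0}=2$, and for all $n\ge2$, $$a_{n+1,0}=2n\,a_{n,0}+2(n-1)\,a_{n-1,0}.$$
   Context: A matching of size $n$ is a set of $n$ arcs $(a,b)$ with $1\le a<b\le 2n$ such that each point of $\{1,\dots,2n\}$ belongs to exactly one arc. An occurrence of the endhered pattern $21$ in a matching $\mu$ is a pair of arcs of $\mu$ of the form $(i+1,j+2),(i+2,j+1)$ (two nested arcs with consecutive starting points and consecutive ending points). *)

theory Defs
  imports Main
begin

definition matchings :: "nat \<Rightarrow> (nat \<times> nat) set set" where
  "matchings n = {M. M \<subseteq> {(a, b). 1 \<le> a \<and> a < b \<and> b \<le> 2 * n}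
      \<and> card M = n
      \<and> (\<forall>p \<in> {1..2 * n}. \<exists>!e. e \<in> M \<and> (fst e = p \<or> snd e = p))}"

definition has_endhered_21 :: "(nat \<times> nat) set \<Rightarrow> bool" where
  "has_endhered_21 M \<longleftrightarrow> (\<exists>i j. (i + 1, j + 2) \<in> M \<and> (i + 2, j + 1) \<in> M)"

definition a0 :: "nat \<Rightarrow> nat" where
  "a0 n = card {M \<in> matchings n. \<not> has_endhered_21 M}"

end

theory Submission
  imports Defs
begin

text \<open>
  Classify the 21-avoiding matchings of size n+1 by the partner a of the last point 2n+2.
  Deleting the arc (a, 2n+2) leaves a matching N of size n. Re-inserting it creates an
  occurrence if (a, 2n) is an arc of N, and it destroys an occurrence (x, y), (x+1, y-1)
  of N exactly when the new point a lands between x and x+1 or between y-1 and y. So a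
  21-avoiding N admits the 2n partners other than that of 2n, an N with exactly one
  occurrence admits 2 partners, and every other N none. With a(n,1) the number of
  matchings with exactly one occurrence, a(n+1,0) = 2n a(n,0) + 2 a(n,1).

  In a matching of size m+1 with exactly one occurrence (c-1, d+1), (c, d), deleting the
  inner arc (c, d) leaves a 21-avoiding matching of size m with the arc (c-1, d-1), and
  conversely nesting a new arc just inside any of the m arcs of a 21-avoiding matching
  creates exactly one occurrence: a(m+1,1) = m a(m,0).
\<close>

definition partial_matching :: "(nat \<times> nat) set \<Rightarrow> bool" where
  "partial_matching M \<longleftrightarrow> (\<forall>(a, b) \<in> M. 1 \<le> a \<and> a < b) \<and>
     (\<forall>(a, b) \<in> M. \<forall>(a', b') \<in> M. (a = a' \<or> a = b' \<or> b = a' \<or> b = b') \<longrightarrow> a = a' \<and> b = b')"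

lemma partial_matching_arcs_eq:
  "partial_matching M \<Longrightarrow> (a, b) \<in> M \<Longrightarrow> (a', b') \<in> M \<Longrightarrow>
   a = a' \<or> a = b' \<or> b = a' \<or> b = b' \<Longrightarrow> a = a' \<and> b = b'"
  unfolding partial_matching_def by blast
lemma partial_matching_arc: "partial_matching M \<Longrightarrow> (a, b) \<in> M \<Longrightarrow> 1 \<le> a \<and> a < b"
  unfolding partial_matching_def by blast
definition points :: "(nat \<times> nat) set \<Rightarrow> nat set" where
  "points M = fst ` M \<union> snd ` M"

lemma card_points:
  assumes "partial_matching M" "finite M"
  shows "card (points M) = 2 * card M"
proof -
  have "inj_on fst M" "inj_on snd M" "fst ` M \<inter> snd ` M = {}"
    using assms(1) unfolding partial_matching_def inj_on_def by fastforce+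
  with assms(2) show ?thesis
    unfolding points_def by (simp add: card_Un_disjoint card_image)
qed

lemma partial_matching_subset: "partial_matching M \<Longrightarrow> N \<subseteq> M \<Longrightarrow> partial_matching N"
  unfolding partial_matching_def by blast
lemma partial_matching_insert_iff:
  assumes "1 \<le> c" "c < d" "c \<notin> points M" "d \<notin> points M"
  shows "partial_matching (insert (c, d) M) \<longleftrightarrow> partial_matching M"
proof
  assume "partial_matching (insert (c, d) M)"
  then show "partial_matching M" by (rule partial_matching_subset) auto
next
  assume "partial_matching M"
  moreover have "c \<noteq> a \<and> c \<noteq> b \<and> d \<noteq> a \<and> d \<noteq> b" if "(a, b) \<in> M" for a b
    using assms(3,4) that unfolding points_def by force
  ultimately show "partial_matching (insert (c, d) M)"
    using assms(1,2) unfolding partial_matching_def by auto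
qed

lemma partial_matching_map_iff:
  assumes "strict_mono g" "g 0 = 0"
  shows "partial_matching (map_prod g g ` M) \<longleftrightarrow> partial_matching M"
proof -
  have inj: "g x = g y \<longleftrightarrow> x = y" for x y
    using strict_mono_eq[OF assms(1)] .
  have pos: "0 < g x \<longleftrightarrow> 0 < x" for x
    using strict_mono_less[OF assms(1), of 0 x] assms(2) by simp
  show ?thesis
    unfolding partial_matching_def
    by (simp add: map_prod_def case_prod_beta Suc_le_eq inj pos strict_mono_less[OF assms(1)])
qed

lemma points_map: "points (map_prod g g ` M) = g ` points M"
  unfolding points_def by force
lemma points_insert: "points (insert (c, d) M) = insert c (insert d (points M))"
  unfolding points_def by auto
lemma matchingsD:
  assumes "M \<in> matchings n"
  shows "partial_matching M \<and> points M = {1..2 * n}"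
proof -
  have bounds: "M \<subseteq> {(a, b). 1 \<le> a \<and> a < b \<and> b \<le> 2 * n}"
    and unique: "\<forall>p \<in> {1..2 * n}. \<exists>!e. e \<in> M \<and> (fst e = p \<or> snd e = p)"
    using assms unfolding matchings_def by auto
  have "(a, b) = (a', b')"
    if "(a, b) \<in> M" "(a', b') \<in> M" "a = a' \<or> a = b' \<or> b = a' \<or> b = b'" for a b a' b'
  proof -
    have "a \<in> {1..2 * n}" "b \<in> {1..2 * n}" using bounds that(1) by auto
    with unique that show ?thesis by (metis fst_conv snd_conv)
  qed
  then have "partial_matching M"
    using bounds unfolding partial_matching_def by fast
  moreover have "points M = {1..2 * n}"
  proof
    show "points M \<subseteq> {1..2 * n}"
      using bounds unfolding points_def by auto
    show "{1..2 * n} \<subseteq> points M"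
      using unique unfolding points_def by blast
  qed
  ultimately show ?thesis ..
qed

lemma matchingsI:
  assumes M: "partial_matching M" "points M = {1..2 * n}"
  shows "M \<in> matchings n"
proof -
  have "M \<subseteq> points M \<times> points M"
    unfolding points_def by force
  moreover have "finite (points M \<times> points M)"
    using M(2) by simp
  ultimately have "finite M"
    by (rule finite_subset)
  then have "card M = n"
    using card_points[of M] M by simp
  moreover have "M \<subseteq> {(a, b). 1 \<le> a \<and> a < b \<and> b \<le> 2 * n}"
  proof (clarify)
    fix a b assume "(a, b) \<in> M"
    moreover from this have "b \<in> points M" unfolding points_def by force
    ultimately show "1 \<le> a \<and> a < b \<and> b \<le> 2 * n"
      using M unfolding partial_matching_def by auto
  qed
  moreover have "\<exists>!e. e \<in> M \<and> (fst e = p \<or> snd e = p)" if "p \<in> {1..2 * n}" for p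
  proof -
    have "p \<in> points M" using M that by simp
    then obtain e where "e \<in> M" "fst e = p \<or> snd e = p"
      unfolding points_def by blast
    moreover have "e' = e" if "e' \<in> M" "fst e' = p \<or> snd e' = p" for e'
    proof -
      obtain a b a' b' where "e = (a, b)" "e' = (a', b')" by fastforce
      with \<open>e \<in> M\<close> \<open>fst e = p \<or> snd e = p\<close> that M show ?thesis
        unfolding partial_matching_def by fastforce
    qed
    ultimately show ?thesis by blast
  qed
  ultimately show ?thesis
    unfolding matchings_def by blast
qed

lemma matchings_iff: "M \<in> matchings n \<longleftrightarrow> partial_matching M \<and> points M = {1..2 * n}"
  using matchingsD matchingsI by blast
lemma finite_matchings: "finite (matchings n)"
proof (rule finite_subset)
  show "matchings n \<subseteq> Pow ({1..2 * n} \<times> {1..2 * n})"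
    unfolding matchings_def by auto
qed simp

lemma matching_arc_bounds: "M \<in> matchings n \<Longrightarrow> (a, b) \<in> M \<Longrightarrow> 1 \<le> a \<and> a < b \<and> b \<le> 2 * n"
  unfolding matchings_def by auto
lemma matching_arcs_eq:
  "M \<in> matchings n \<Longrightarrow> (a, b) \<in> M \<Longrightarrow> (a', b') \<in> M \<Longrightarrow>
   a = a' \<or> a = b' \<or> b = a' \<or> b = b' \<Longrightarrow> a = a' \<and> b = b'"
  using matchings_iff[of M n] partial_matching_arcs_eq by blast
definition skip :: "nat \<Rightarrow> nat \<Rightarrow> nat \<Rightarrow> nat" where
  "skip c d x = (if x < c then x else if Suc x < d then Suc x else Suc (Suc x))"

definition unskip :: "nat \<Rightarrow> nat \<Rightarrow> nat \<Rightarrow> nat" where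
  "unskip c d y = (if y < c then y else if y < d then y - 1 else y - 2)"

lemma strict_mono_skip: "c < d \<Longrightarrow> strict_mono (skip c d)"
  unfolding strict_mono_def skip_def by auto
lemma unskip_skip [simp]: "c < d \<Longrightarrow> unskip c d (skip c d x) = x"
  unfolding skip_def unskip_def by auto
lemma skip_unskip: "c < d \<Longrightarrow> y \<noteq> c \<Longrightarrow> y \<noteq> d \<Longrightarrow> skip c d (unskip c d y) = y"
  unfolding skip_def unskip_def by auto
lemma skip_range:
  assumes "c < d"
  shows "range (skip c d) = - {c, d}"
proof (intro equalityI subsetI)
  fix y assume "y \<in> range (skip c d)"
  then show "y \<in> - {c, d}"
    using assms unfolding skip_def by auto
next
  fix y assume "y \<in> - {c, d}"
  then have "y = skip c d (unskip c d y)"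
    using skip_unskip[OF assms] by auto
  then show "y \<in> range (skip c d)" by (rule range_eqI)
qed

lemma skip_Suc:
  "c < d \<Longrightarrow> Suc (skip c d x) \<notin> {c, d} \<Longrightarrow> skip c d (Suc x) = Suc (skip c d x)"
  unfolding skip_def by auto
lemma skip_eq_Suc_skipD: "c < d \<Longrightarrow> skip c d x' = Suc (skip c d x) \<Longrightarrow> x' = Suc x"
  unfolding skip_def by (auto split: if_splits)
lemma skip_image_atLeastAtMost:
  assumes "1 \<le> c" "c < d" "d \<le> 2 * n + 2"
  shows "skip c d ` {1..2 * n} = {1..2 * n + 2} - {c, d}"
proof
  show "skip c d ` {1..2 * n} \<subseteq> {1..2 * n + 2} - {c, d}"
    using assms unfolding skip_def by auto
  show "{1..2 * n + 2} - {c, d} \<subseteq> skip c d ` {1..2 * n}"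
  proof
    fix y assume y: "y \<in> {1..2 * n + 2} - {c, d}"
    then have "unskip c d y \<in> {1..2 * n}"
      using assms unfolding unskip_def by auto
    with y show "y \<in> skip c d ` {1..2 * n}"
      using skip_unskip[OF assms(2)] by force
  qed
qed

definition insert_arc :: "nat \<Rightarrow> nat \<Rightarrow> (nat \<times> nat) set \<Rightarrow> (nat \<times> nat) set" where
  "insert_arc c d N = insert (c, d) (map_prod (skip c d) (skip c d) ` N)"

definition remove_arc :: "nat \<Rightarrow> nat \<Rightarrow> (nat \<times> nat) set \<Rightarrow> (nat \<times> nat) set" where
  "remove_arc c d M = map_prod (unskip c d) (unskip c d) ` (M - {(c, d)})"

lemma insert_arc_in_matchings_iff:
  assumes cd: "1 \<le> c" "c < d" "d \<le> 2 * n + 2"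
  shows "insert_arc c d N \<in> matchings (Suc n) \<longleftrightarrow> N \<in> matchings n"
proof -
  let ?N' = "map_prod (skip c d) (skip c d) ` N"
  have points': "points ?N' = skip c d ` points N"
    by (rule points_map)
  have avoid: "c \<notin> points ?N'" "d \<notin> points ?N'"
    unfolding points' using skip_range[OF cd(2)] by blast+
  then have "partial_matching (insert_arc c d N) \<longleftrightarrow> partial_matching N"
    unfolding insert_arc_def using cd
    by (simp add: partial_matching_insert_iff partial_matching_map_iff strict_mono_skip skip_def)
  moreover have "points (insert_arc c d N) = {1..2 * n + 2} \<longleftrightarrow> points N = {1..2 * n}"
  proof -
    have "c \<in> {1..2 * n + 2}" "d \<in> {1..2 * n + 2}"
      using cd by auto
    with avoid have "points (insert_arc c d N) = {1..2 * n + 2} \<longleftrightarrow>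
        points ?N' = {1..2 * n + 2} - {c, d}"
      unfolding insert_arc_def points_insert by blast
    also have "\<dots> \<longleftrightarrow> skip c d ` points N = skip c d ` {1..2 * n}"
      unfolding points' skip_image_atLeastAtMost[OF cd] ..
    also have "\<dots> \<longleftrightarrow> points N = {1..2 * n}"
      using strict_mono_imp_inj_on[OF strict_mono_skip[OF cd(2)]] by (simp add: inj_image_eq_iff)
    finally show ?thesis .
  qed
  ultimately show ?thesis
    by (simp add: matchings_iff)
qed

lemma remove_insert_arc:
  assumes "c < d"
  shows "remove_arc c d (insert_arc c d N) = N"
proof -
  have "(c, d) \<notin> map_prod (skip c d) (skip c d) ` N"
    using skip_range[OF assms] by auto
  then have "insert_arc c d N - {(c, d)} = map_prod (skip c d) (skip c d) ` N"
    unfolding insert_arc_def by simp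
  moreover have "map_prod (unskip c d) (unskip c d) (map_prod (skip c d) (skip c d) e) = e" for e
    using assms by (cases e) simp
  ultimately show ?thesis
    unfolding remove_arc_def by (simp add: image_image)
qed

lemma insert_remove_arc:
  assumes "partial_matching M" "(c, d) \<in> M"
  shows "insert_arc c d (remove_arc c d M) = M"
proof -
  have "c < d" using partial_matching_arc[OF assms] by simp
  have inverse: "map_prod (skip c d) (skip c d) (map_prod (unskip c d) (unskip c d) e) = e"
    if "e \<in> M - {(c, d)}" for e
  proof -
    obtain x y where e: "e = (x, y)" by fastforce
    with that have xy: "(x, y) \<in> M" "(x, y) \<noteq> (c, d)" by auto
    have "\<not> (x = c \<or> x = d \<or> y = c \<or> y = d)"
      using partial_matching_arcs_eq[OF assms(1) xy(1) assms(2)] xy(2) by blast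
    with e \<open>c < d\<close> show ?thesis by (simp add: skip_unskip)
  qed
  have "map_prod (skip c d) (skip c d) ` remove_arc c d M = (\<lambda>e. e) ` (M - {(c, d)})"
    unfolding remove_arc_def image_image by (rule image_cong[OF refl inverse])
  then show ?thesis
    unfolding insert_arc_def using insert_Diff[OF assms(2)] by simp
qed

lemma bij_betw_insert_arc:
  assumes "1 \<le> c" "c < d" "d \<le> 2 * n + 2"
  shows "bij_betw (insert_arc c d) (matchings n) {M \<in> matchings (Suc n). (c, d) \<in> M}"
proof (rule bij_betw_byWitness[where f' = "remove_arc c d"])
  show "\<forall>N \<in> matchings n. remove_arc c d (insert_arc c d N) = N"
    using remove_insert_arc[OF assms(2)] by blast
  show "\<forall>M \<in> {M \<in> matchings (Suc n). (c, d) \<in> M}. insert_arc c d (remove_arc c d M) = M"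
    using insert_remove_arc matchings_iff by blast
  show "insert_arc c d ` matchings n \<subseteq> {M \<in> matchings (Suc n). (c, d) \<in> M}"
  proof (rule image_subsetI, rule CollectI, rule conjI)
    show "insert_arc c d N \<in> matchings (Suc n)" if "N \<in> matchings n" for N
      using insert_arc_in_matchings_iff[OF assms] that by blast
    show "(c, d) \<in> insert_arc c d N" for N
      unfolding insert_arc_def by simp
  qed
  show "remove_arc c d ` {M \<in> matchings (Suc n). (c, d) \<in> M} \<subseteq> matchings n"
  proof (rule image_subsetI)
    fix M assume "M \<in> {M \<in> matchings (Suc n). (c, d) \<in> M}"
    then have "insert_arc c d (remove_arc c d M) \<in> matchings (Suc n)"
      using insert_remove_arc matchings_iff by auto
    then show "remove_arc c d M \<in> matchings n"
      using insert_arc_in_matchings_iff[OF assms] by blast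
  qed
qed

lemma card_matchings_with_arc:
  assumes "1 \<le> c" "c < d" "d \<le> 2 * n + 2"
  shows "card {M \<in> matchings (Suc n). (c, d) \<in> M \<and> P M} = card {N \<in> matchings n. P (insert_arc c d N)}"
proof -
  have "bij_betw (insert_arc c d) {N \<in> matchings n. P (insert_arc c d N)}
      {M \<in> {M \<in> matchings (Suc n). (c, d) \<in> M}. P M}"
    by (rule bij_betw_Collect[OF bij_betw_insert_arc[OF assms]]) simp
  then show ?thesis
    by (simp add: bij_betw_same_card conj_assoc)
qed

definition endhered_21_at :: "(nat \<times> nat) set \<Rightarrow> nat \<Rightarrow> nat \<Rightarrow> bool" where
  "endhered_21_at M x y \<longleftrightarrow> (x, y) \<in> M \<and> (Suc x, y - 1) \<in> M"

definition avoids_21 :: "(nat \<times> nat) set \<Rightarrow> bool" where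
  "avoids_21 M \<longleftrightarrow> (\<forall>x y. \<not> endhered_21_at M x y)"

definition exactly_one_21 :: "(nat \<times> nat) set \<Rightarrow> bool" where
  "exactly_one_21 M \<longleftrightarrow> (\<exists>x y. endhered_21_at M x y \<and> (\<forall>x' y'. endhered_21_at M x' y' \<longrightarrow> x' = x \<and> y' = y))"

definition a1 :: "nat \<Rightarrow> nat" where
  "a1 n = card {M \<in> matchings n. exactly_one_21 M}"

lemma has_endhered_21_iff:
  assumes "partial_matching M"
  shows "has_endhered_21 M \<longleftrightarrow> \<not> avoids_21 M"
proof
  assume "has_endhered_21 M"
  then obtain i j where "(i + 1, j + 2) \<in> M" "(i + 2, j + 1) \<in> M"
    unfolding has_endhered_21_def by blast
  then have "endhered_21_at M (i + 1) (j + 2)"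
    unfolding endhered_21_at_def by simp
  then show "\<not> avoids_21 M"
    unfolding avoids_21_def by blast
next
  assume "\<not> avoids_21 M"
  then obtain x y where xy: "(x, y) \<in> M" "(Suc x, y - 1) \<in> M"
    unfolding avoids_21_def endhered_21_at_def by blast
  then have "1 \<le> x" "Suc x < y - 1"
    using partial_matching_arc[OF assms] by auto
  then have "(x - 1 + 1, y - 2 + 2) = (x, y)" "(x - 1 + 2, y - 2 + 1) = (Suc x, y - 1)"
    by auto
  with xy show "has_endhered_21 M"
    unfolding has_endhered_21_def by metis
qed

lemma a0_eq_card_avoids_21: "a0 n = card {M \<in> matchings n. avoids_21 M}"
  unfolding a0_def using has_endhered_21_iff matchings_iff by metis
lemma endhered_21_at_insert_arcI:
  assumes "c < d" "0 < y" "endhered_21_at N x y"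
    and "Suc (skip c d x) \<notin> {c, d}" "Suc (skip c d (y - 1)) \<notin> {c, d}"
  shows "endhered_21_at (insert_arc c d N) (skip c d x) (skip c d y)"
proof -
  have "skip c d (Suc x) = Suc (skip c d x)"
    using skip_Suc[OF assms(1,4)] .
  moreover have "skip c d y = Suc (skip c d (y - 1))"
    using skip_Suc[OF assms(1,5)] assms(2) by simp
  ultimately show ?thesis
    using assms(3) unfolding endhered_21_at_def insert_arc_def by force
qed

lemma endhered_21_at_insert_arcE:
  assumes "partial_matching N" "c < d" "endhered_21_at (insert_arc c d N) X Y"
  obtains "X = c" "Y = d"
  | "Suc X = c" "Y = Suc d"
  | x y where "X = skip c d x" "Y = skip c d y" "endhered_21_at N x y"
      "Suc (skip c d x) \<notin> {c, d}" "Suc (skip c d (y - 1)) \<notin> {c, d}"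
proof -
  have outer: "(X, Y) \<in> insert_arc c d N" and inner: "(Suc X, Y - 1) \<in> insert_arc c d N"
    using assms(3) unfolding endhered_21_at_def by auto
  consider "(X, Y) = (c, d)" | "(Suc X, Y - 1) = (c, d)"
    | "(X, Y) \<in> map_prod (skip c d) (skip c d) ` N" "(Suc X, Y - 1) \<in> map_prod (skip c d) (skip c d) ` N"
    using outer inner unfolding insert_arc_def by blast
  then show thesis
  proof cases
    case 1
    then show thesis using that(1) by simp
  next
    case 2
    then have "Suc X = c" "Y - 1 = d" by simp_all
    moreover from this have "Y = Suc d" using assms(2) by arith
    ultimately show thesis using that(2) by blast
  next
    case 3
    then obtain x y x' y' where xy: "(x, y) \<in> N" "X = skip c d x" "Y = skip c d y"
      and x'y': "(x', y') \<in> N" "Suc X = skip c d x'" "Y - 1 = skip c d y'"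
      by auto
    have "x' = Suc x"
      using xy(2) x'y'(2) skip_eq_Suc_skipD[OF assms(2)] by metis
    have "2 \<le> y"
      using partial_matching_arc[OF assms(1) xy(1)] by simp
    then have "2 \<le> skip c d y"
      using strict_mono_imp_increasing[OF strict_mono_skip[OF assms(2)], of y] by simp
    then have y_adjacent: "skip c d y = Suc (skip c d y')"
      using xy(3) x'y'(3) by arith
    then have "y = Suc y'"
      by (rule skip_eq_Suc_skipD[OF assms(2)])
    have "endhered_21_at N x y"
      using xy x'y' \<open>x' = Suc x\<close> \<open>y = Suc y'\<close> unfolding endhered_21_at_def by simp
    moreover have "Suc (skip c d x) \<in> range (skip c d)"
      using xy(2) x'y'(2) by (metis rangeI)
    moreover have "Suc (skip c d (y - 1)) \<in> range (skip c d)"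
      using y_adjacent \<open>y = Suc y'\<close> by (metis diff_Suc_1 rangeI)
    ultimately show thesis
      using that(3) xy skip_range[OF assms(2)] by auto
  qed
qed

lemma endhered_21_at_bounds:
  "M \<in> matchings n \<Longrightarrow> endhered_21_at M x y \<Longrightarrow> 1 \<le> x \<and> Suc x < y - 1 \<and> y \<le> 2 * n"
  unfolding endhered_21_at_def using matching_arc_bounds by fastforce

lemma matching_last_partner:
  assumes "M \<in> matchings n" "1 \<le> n"
  shows "\<exists>!a. (a, 2 * n) \<in> M"
proof -
  have "2 * n \<in> points M"
    using assms matchings_iff by simp
  then obtain a where "(a, 2 * n) \<in> M"
    unfolding points_def using matching_arc_bounds[OF assms(1)] by fastforce
  moreover have "a' = a" if "(a', 2 * n) \<in> M" for a'
    using matching_arcs_eq[OF assms(1) that \<open>(a, 2 * n) \<in> M\<close>] by simp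
  ultimately show ?thesis by blast
qed

lemma avoids_21_insert_last_arcD:
  assumes N: "N \<in> matchings n" and a: "1 \<le> a" "a \<le> 2 * n + 1"
    and avoids: "avoids_21 (insert_arc a (2 * n + 2) N)" (is "avoids_21 ?M")
  shows "(a, 2 * n) \<notin> N \<and> (\<forall>x y. endhered_21_at N x y \<longrightarrow> a = Suc x \<or> a = y)"
proof -
  have "(a, 2 * n) \<notin> N"
  proof
    assume arc: "(a, 2 * n) \<in> N"
    then have "a < 2 * n"
      using matching_arc_bounds[OF N] by simp
    with arc have "(Suc a, 2 * n + 1) \<in> ?M"
      unfolding insert_arc_def skip_def by force
    then have "endhered_21_at ?M a (2 * n + 2)"
      unfolding endhered_21_at_def insert_arc_def by simp
    with avoids show False
      unfolding avoids_21_def by blast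
  qed
  moreover have "a = Suc x \<or> a = y" if occ: "endhered_21_at N x y" for x y
  proof (rule ccontr)
    assume "\<not> (a = Suc x \<or> a = y)"
    moreover have "1 \<le> x" "Suc x < y - 1" "y \<le> 2 * n"
      using endhered_21_at_bounds[OF N occ] by auto
    ultimately have "Suc (skip a (2 * n + 2) x) \<notin> {a, 2 * n + 2}"
      "Suc (skip a (2 * n + 2) (y - 1)) \<notin> {a, 2 * n + 2}"
      by (auto simp: skip_def)
    then have "endhered_21_at ?M (skip a (2 * n + 2) x) (skip a (2 * n + 2) y)"
      using endhered_21_at_insert_arcI[OF _ _ occ] a \<open>Suc x < y - 1\<close> by simp
    with avoids show False
      unfolding avoids_21_def by blast
  qed
  ultimately show "(a, 2 * n) \<notin> N \<and> (\<forall>x y. endhered_21_at N x y \<longrightarrow> a = Suc x \<or> a = y)"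
    by blast
qed

lemma avoids_21_insert_last_arcI:
  assumes N: "N \<in> matchings n" and a: "1 \<le> a" "a \<le> 2 * n + 1"
    and admissible: "(a, 2 * n) \<notin> N \<and> (\<forall>x y. endhered_21_at N x y \<longrightarrow> a = Suc x \<or> a = y)"
  shows "avoids_21 (insert_arc a (2 * n + 2) N)" (is "avoids_21 ?M")
proof -
  have M: "?M \<in> matchings (Suc n)"
    using insert_arc_in_matchings_iff a N by simp
  have "\<not> endhered_21_at ?M X Y" for X Y
  proof
    assume occ: "endhered_21_at ?M X Y"
    have "partial_matching N" "a < 2 * n + 2"
      using N a matchings_iff by auto
    from this occ show False
    proof (cases rule: endhered_21_at_insert_arcE)
      case 1
      with occ have "(Suc a, 2 * n + 1) \<in> map_prod (skip a (2 * n + 2)) (skip a (2 * n + 2)) ` N"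
        unfolding endhered_21_at_def insert_arc_def by simp
      then obtain x y where "(x, y) \<in> N" "skip a (2 * n + 2) x = Suc a" "skip a (2 * n + 2) y = 2 * n + 1"
        by auto
      moreover from this have "x \<le> 2 * n" "y \<le> 2 * n"
        using matching_arc_bounds[OF N] by fastforce+
      ultimately show False
        using admissible by (auto simp: skip_def split: if_splits)
    next
      case 2
      with occ M show False
        unfolding endhered_21_at_def using matching_arc_bounds by fastforce
    next
      case (3 x y)
      then have "x \<le> 2 * n" "1 \<le> y" "y \<le> 2 * n" "a = Suc x \<or> a = y"
        using endhered_21_at_bounds[OF N 3(3)] admissible 3(3) by auto
      with 3 show False
        by (auto simp: skip_def)
    qed
  qed
  then show "avoids_21 ?M"
    unfolding avoids_21_def by blast
qed

definition admissible_last_partners :: "(nat \<times> nat) set \<Rightarrow> nat \<Rightarrow> nat set" where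
  "admissible_last_partners N n = {a \<in> {1..2 * n + 1}. (a, 2 * n) \<notin> N \<and>
     (\<forall>x y. endhered_21_at N x y \<longrightarrow> a = Suc x \<or> a = y)}"

lemma avoids_21_insert_last_arc_iff:
  assumes "N \<in> matchings n" "a \<in> {1..2 * n + 1}"
  shows "avoids_21 (insert_arc a (2 * n + 2) N) \<longleftrightarrow> a \<in> admissible_last_partners N n"
proof -
  have a: "1 \<le> a" "a \<le> 2 * n + 1"
    using assms(2) by auto
  show ?thesis
    using assms(2) avoids_21_insert_last_arcD[OF assms(1) a] avoids_21_insert_last_arcI[OF assms(1) a]
    unfolding admissible_last_partners_def by blast
qed

lemma endhered_21_at_eq_if_shared_point:
  assumes N: "N \<in> matchings n" and occ: "endhered_21_at N x y" "endhered_21_at N x' y'"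
    and p: "p \<in> {Suc x, y}" "p \<in> {Suc x', y'}"
  shows "x' = x \<and> y' = y"
proof -
  have arcs: "(x, y) \<in> N" "(Suc x, y - 1) \<in> N" "(x', y') \<in> N" "(Suc x', y' - 1) \<in> N"
    using occ unfolding endhered_21_at_def by auto
  have "Suc x < y - 1" "Suc x' < y' - 1"
    using endhered_21_at_bounds[OF N] occ by auto
  from p consider "Suc x = Suc x'" | "Suc x = y'" | "y = Suc x'" | "y = y'"
    by blast
  then show ?thesis
  proof cases
    case 1
    then have "x = x'" by simp
    then show ?thesis using matching_arcs_eq[OF N arcs(1,3)] by blast
  next
    case 2
    then have "Suc x = x'"
      using matching_arcs_eq[OF N arcs(2,3)] by blast
    with 2 \<open>Suc x' < y' - 1\<close> show ?thesis by arith
  next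
    case 3
    then have "x = Suc x'"
      using matching_arcs_eq[OF N arcs(1,4)] by blast
    with 3 \<open>Suc x < y - 1\<close> show ?thesis by arith
  next
    case 4
    then show ?thesis using matching_arcs_eq[OF N arcs(1,3)] by blast
  qed
qed

lemma card_admissible_last_partners_avoids:
  assumes N: "N \<in> matchings n" and "1 \<le> n" and avoids: "avoids_21 N"
  shows "card (admissible_last_partners N n) = 2 * n"
proof -
  obtain p where p: "(p, 2 * n) \<in> N" "\<And>p'. (p', 2 * n) \<in> N \<Longrightarrow> p' = p"
    using matching_last_partner[OF assms(1,2)] by blast
  have "p \<in> {1..2 * n + 1}"
    using matching_arc_bounds[OF N p(1)] by simp
  moreover have "(a, 2 * n) \<notin> N \<longleftrightarrow> a \<noteq> p" for a
    using p by metis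
  then have "admissible_last_partners N n = {1..2 * n + 1} - {p}"
    using avoids unfolding admissible_last_partners_def avoids_21_def by blast
  ultimately show ?thesis
    by simp
qed

lemma card_admissible_last_partners_exactly_one:
  assumes N: "N \<in> matchings n" and one: "exactly_one_21 N"
  shows "card (admissible_last_partners N n) = 2"
proof -
  obtain x y where occ: "endhered_21_at N x y"
    and unique: "\<And>x' y'. endhered_21_at N x' y' \<Longrightarrow> x' = x \<and> y' = y"
    using one unfolding exactly_one_21_def by blast
  have bounds: "1 \<le> x" "Suc x < y - 1" "y \<le> 2 * n"
    using endhered_21_at_bounds[OF N occ] by auto
  have arcs: "(x, y) \<in> N" "(Suc x, y - 1) \<in> N"
    using occ unfolding endhered_21_at_def by auto
  have "(Suc x, 2 * n) \<notin> N"
  proof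
    assume "(Suc x, 2 * n) \<in> N"
    from matching_arcs_eq[OF N arcs(2) this] bounds show False by simp
  qed
  moreover have "(y, 2 * n) \<notin> N"
  proof
    assume "(y, 2 * n) \<in> N"
    from matching_arcs_eq[OF N arcs(1) this] bounds show False by simp
  qed
  moreover have "Suc x \<in> {1..2 * n + 1}" "y \<in> {1..2 * n + 1}"
    using bounds by auto
  ultimately have "admissible_last_partners N n = {Suc x, y}"
    using occ unique unfolding admissible_last_partners_def by blast
  with bounds show ?thesis by simp
qed

lemma admissible_last_partners_empty:
  assumes N: "N \<in> matchings n" and "\<not> avoids_21 N" "\<not> exactly_one_21 N"
  shows "admissible_last_partners N n = {}"
proof (rule ccontr)
  obtain x y where occ: "endhered_21_at N x y"
    using assms(2) unfolding avoids_21_def by blast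
  assume "admissible_last_partners N n \<noteq> {}"
  then obtain p where p: "\<And>x y. endhered_21_at N x y \<Longrightarrow> p \<in> {Suc x, y}"
    unfolding admissible_last_partners_def by auto
  have "x' = x \<and> y' = y" if "endhered_21_at N x' y'" for x' y'
    using endhered_21_at_eq_if_shared_point[OF N occ that p[OF occ] p[OF that]] .
  with occ assms(3) show False
    unfolding exactly_one_21_def by blast
qed

lemma card_avoiding_last_partners:
  assumes N: "N \<in> matchings n" and "1 \<le> n"
  shows "card {a \<in> {1..2 * n + 1}. avoids_21 (insert_arc a (2 * n + 2) N)} =
    (if avoids_21 N then 2 * n else 0) + (if exactly_one_21 N then 2 else 0)"
proof -
  have "{a \<in> {1..2 * n + 1}. avoids_21 (insert_arc a (2 * n + 2) N)} = admissible_last_partners N n"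
    using avoids_21_insert_last_arc_iff[OF N] admissible_last_partners_def by auto
  moreover have "\<not> (exactly_one_21 N \<and> avoids_21 N)"
    unfolding exactly_one_21_def avoids_21_def by blast
  ultimately show ?thesis
    using card_admissible_last_partners_avoids[OF assms] card_admissible_last_partners_exactly_one[OF N]
      admissible_last_partners_empty[OF N] by auto
qed

lemma card_Collect_eq_sum_unique:
  assumes "finite A" "finite I" "\<And>x. x \<in> A \<Longrightarrow> P x \<Longrightarrow> \<exists>!i. i \<in> I \<and> R i x"
  shows "card {x \<in> A. P x} = (\<Sum>i\<in>I. card {x \<in> A. R i x \<and> P x})"
proof -
  have "{x \<in> A. P x} = (\<Union>i\<in>I. {x \<in> A. R i x \<and> P x})"
    using assms(3) by blast
  moreover have "\<forall>i\<in>I. \<forall>j\<in>I. i \<noteq> j \<longrightarrow> {x \<in> A. R i x \<and> P x} \<inter> {x \<in> A. R j x \<and> P x} = {}"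
    using assms(3) by blast
  ultimately show ?thesis
    using assms(1,2) by (simp add: card_UN_disjoint)
qed

lemma sum_card_Collect_swap:
  assumes "finite A" "finite B"
  shows "(\<Sum>a\<in>A. card {b \<in> B. R a b}) = (\<Sum>b\<in>B. card {a \<in> A. R a b})"
proof -
  have "(\<Sum>a\<in>A. card {b \<in> B. R a b}) = (\<Sum>a\<in>A. \<Sum>b\<in>B. if R a b then 1 else 0)"
    using assms by (simp add: sum.If_cases Int_def)
  also have "\<dots> = (\<Sum>b\<in>B. \<Sum>a\<in>A. if R a b then 1 else 0)"
    by (rule sum.swap)
  also have "\<dots> = (\<Sum>b\<in>B. card {a \<in> A. R a b})"
    using assms by (simp add: sum.If_cases Int_def)
  finally show ?thesis .
qed

lemma a0_Suc:
  assumes "1 \<le> n"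
  shows "a0 (Suc n) = 2 * n * a0 n + 2 * a1 n"
proof -
  have last: "\<exists>!a. a \<in> {1..2 * n + 1} \<and> (a, 2 * n + 2) \<in> M" if "M \<in> matchings (Suc n)" for M
    using matching_last_partner[OF that] matching_arc_bounds[OF that] by fastforce
  have "a0 (Suc n) = (\<Sum>a = 1..2 * n + 1. card {M \<in> matchings (Suc n). (a, 2 * n + 2) \<in> M \<and> avoids_21 M})"
    unfolding a0_eq_card_avoids_21 using last finite_matchings
    by (intro card_Collect_eq_sum_unique) auto+
  also have "\<dots> = (\<Sum>a = 1..2 * n + 1. card {N \<in> matchings n. avoids_21 (insert_arc a (2 * n + 2) N)})"
    by (intro sum.cong refl card_matchings_with_arc) auto+
  also have "\<dots> = (\<Sum>N\<in>matchings n. card {a \<in> {1..2 * n + 1}. avoids_21 (insert_arc a (2 * n + 2) N)})"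
    by (rule sum_card_Collect_swap) (simp_all add: finite_matchings)
  also have "\<dots> = (\<Sum>N\<in>matchings n. (if avoids_21 N then 2 * n else 0) + (if exactly_one_21 N then 2 else 0))"
    using card_avoiding_last_partners assms by simp
  also have "\<dots> = 2 * n * a0 n + 2 * a1 n"
    unfolding a0_eq_card_avoids_21 a1_def
    by (simp add: sum.distrib sum.If_cases finite_matchings Int_def mult.commute)
  finally show ?thesis .
qed

lemma endhered_21_at_insert_nested_arc:
  assumes N: "partial_matching N" and cd: "c < d" and arc: "(c - 1, d - 1) \<in> N"
    and occ: "endhered_21_at N x y" and x: "x \<noteq> c - 1"
  shows "endhered_21_at (insert_arc c d N) (skip c d x) (skip c d y)"
proof (rule endhered_21_at_insert_arcI[OF cd _ occ])
  have arcs: "(x, y) \<in> N" "(Suc x, y - 1) \<in> N"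
    using occ unfolding endhered_21_at_def by auto
  have "1 \<le> x" "Suc x < y - 1" "1 \<le> c - 1" "c - 1 < d - 1"
    using partial_matching_arc[OF N] arcs arc by auto
  show "0 < y"
    using \<open>Suc x < y - 1\<close> by simp
  show "Suc (skip c d x) \<notin> {c, d}"
  proof
    assume "Suc (skip c d x) \<in> {c, d}"
    then consider "x = c - 1" | "Suc x = d - 1"
      using cd unfolding skip_def by (auto split: if_splits)
    then show False
    proof cases
      case 2
      then show False
        using partial_matching_arcs_eq[OF N arcs(2) arc] \<open>c - 1 < d - 1\<close> by simp
    qed (use x in simp)
  qed
  show "Suc (skip c d (y - 1)) \<notin> {c, d}"
  proof
    assume "Suc (skip c d (y - 1)) \<in> {c, d}"
    then consider "y - 1 = c - 1" | "y = d - 1"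
      using cd \<open>Suc x < y - 1\<close> unfolding skip_def by (auto split: if_splits)
    then show False
    proof cases
      case 1
      then show False
        using partial_matching_arcs_eq[OF N arcs(2) arc] \<open>c - 1 < d - 1\<close> by simp
    next
      case 2
      then show False
        using partial_matching_arcs_eq[OF N arcs(1) arc] x by simp
    qed
  qed
qed

lemma endhered_21_at_insert_arc_inside:
  assumes N: "partial_matching N" and cd: "1 \<le> c" "c < d"
    and occ: "endhered_21_at N (c - 1) (d - 1)"
  shows "endhered_21_at (insert_arc c d N) c d"
proof -
  have "(c, d - 2) \<in> N"
    using occ cd(1) unfolding endhered_21_at_def by (simp add: numeral_2_eq_2)
  moreover from this have "c < d - 2"
    using partial_matching_arc[OF N] by simp
  ultimately have "(Suc c, d - 1) \<in> insert_arc c d N"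
    unfolding insert_arc_def skip_def by force
  then show ?thesis
    unfolding endhered_21_at_def insert_arc_def by simp
qed

lemma exactly_one_21_insert_nested_arcI:
  assumes N: "N \<in> matchings m" and cd: "1 \<le> c" "c < d" "d \<le> 2 * m + 2"
    and arc: "(c - 1, d - 1) \<in> N" and avoids: "avoids_21 N"
  shows "(c - 1, d + 1) \<in> insert_arc c d N \<and> exactly_one_21 (insert_arc c d N)"
    (is "_ \<in> ?M \<and> _")
proof -
  have "partial_matching N"
    using N matchings_iff by simp
  have "1 \<le> c - 1" "c - 1 < d - 1"
    using matching_arc_bounds[OF N arc] by auto
  then have outer: "(c - 1, d + 1) \<in> ?M"
    using arc unfolding insert_arc_def skip_def by force
  then have occ: "endhered_21_at ?M (c - 1) (d + 1)"
    using \<open>1 \<le> c - 1\<close> unfolding endhered_21_at_def insert_arc_def by simp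
  have "X = c - 1 \<and> Y = d + 1" if "endhered_21_at ?M X Y" for X Y
    using \<open>partial_matching N\<close> cd(2) that
  proof (cases rule: endhered_21_at_insert_arcE)
    case 1
    with that have "(Suc c, d - 1) \<in> map_prod (skip c d) (skip c d) ` N"
      unfolding endhered_21_at_def insert_arc_def by simp
    then obtain x y where "(x, y) \<in> N" "skip c d x = Suc c" "skip c d y = d - 1"
      by auto
    moreover from this have "x = c" "y = d - 2"
      using cd unfolding skip_def by (auto split: if_splits)
    ultimately have "(c, d - 2) \<in> N"
      by simp
    with arc \<open>1 \<le> c - 1\<close> have "endhered_21_at N (c - 1) (d - 1)"
      unfolding endhered_21_at_def by (simp add: numeral_2_eq_2)
    with avoids show ?thesis
      unfolding avoids_21_def by blast
  next
    case 2
    then show ?thesis by simp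
  next
    case 3
    with avoids show ?thesis
      unfolding avoids_21_def by blast
  qed
  with outer occ show ?thesis
    unfolding exactly_one_21_def by blast
qed

lemma exactly_one_21_insert_nested_arcD:
  assumes N: "N \<in> matchings m" and cd: "1 \<le> c" "c < d" "d \<le> 2 * m + 2"
    and outer: "(c - 1, d + 1) \<in> insert_arc c d N" and one: "exactly_one_21 (insert_arc c d N)"
  shows "(c - 1, d - 1) \<in> N \<and> avoids_21 N"
proof -
  let ?M = "insert_arc c d N"
  have "partial_matching N"
    using N matchings_iff by simp
  from outer obtain x y where "(x, y) \<in> N" "skip c d x = c - 1" "skip c d y = d + 1"
    unfolding insert_arc_def by auto
  then have arc: "(c - 1, d - 1) \<in> N"
    using cd unfolding skip_def by (auto split: if_splits)
  then have "1 \<le> c - 1" "c - 1 < d - 1"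
    using matching_arc_bounds[OF N arc] by auto
  have "endhered_21_at ?M (c - 1) (d + 1)"
    using outer \<open>1 \<le> c - 1\<close> unfolding endhered_21_at_def insert_arc_def by simp
  with one have unique: "X = c - 1 \<and> Y = d + 1" if "endhered_21_at ?M X Y" for X Y
    using that unfolding exactly_one_21_def by blast
  have "\<not> endhered_21_at N x y" for x y
  proof
    assume occ: "endhered_21_at N x y"
    show False
    proof (cases "x = c - 1")
      case True
      have "y = d - 1"
        using occ True partial_matching_arcs_eq[OF \<open>partial_matching N\<close> _ arc, of x y]
        unfolding endhered_21_at_def by auto
      with occ True have "endhered_21_at ?M c d"
        using endhered_21_at_insert_arc_inside[OF \<open>partial_matching N\<close> cd(1,2)] by simp
      with unique cd(1) show False by fastforce
    next
      case False
      with endhered_21_at_insert_nested_arc[OF \<open>partial_matching N\<close> cd(2) arc occ]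
      have "skip c d x = c - 1"
        using unique by blast
      with False show False
        unfolding skip_def by (auto split: if_splits)
    qed
  qed
  with arc show ?thesis
    unfolding avoids_21_def by blast
qed

lemma exactly_one_21_inner_arc_unique:
  assumes M: "M \<in> matchings n" and one: "exactly_one_21 M"
  shows "\<exists>!p. p \<in> {(c, d). 1 \<le> c \<and> c < d \<and> d \<le> 2 * n} \<and>
    (case p of (c, d) \<Rightarrow> (c, d) \<in> M \<and> (c - 1, d + 1) \<in> M)"
proof -
  obtain x y where occ: "endhered_21_at M x y"
    and unique: "\<And>x' y'. endhered_21_at M x' y' \<Longrightarrow> x' = x \<and> y' = y"
    using one unfolding exactly_one_21_def by blast
  have bounds: "1 \<le> x" "Suc x < y - 1" "y \<le> 2 * n"
    using endhered_21_at_bounds[OF M occ] by auto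
  show ?thesis
  proof (rule ex1I[of _ "(Suc x, y - 1)"])
    show "(Suc x, y - 1) \<in> {(c, d). 1 \<le> c \<and> c < d \<and> d \<le> 2 * n} \<and>
      (case (Suc x, y - 1) of (c, d) \<Rightarrow> (c, d) \<in> M \<and> (c - 1, d + 1) \<in> M)"
      using occ bounds unfolding endhered_21_at_def by simp
  next
    fix p
    assume p: "p \<in> {(c, d). 1 \<le> c \<and> c < d \<and> d \<le> 2 * n} \<and>
      (case p of (c, d) \<Rightarrow> (c, d) \<in> M \<and> (c - 1, d + 1) \<in> M)"
    obtain c d where "p = (c, d)" by fastforce
    with p have "1 \<le> c" "endhered_21_at M (c - 1) (d + 1)"
      unfolding endhered_21_at_def by auto
    with unique \<open>p = (c, d)\<close> bounds show "p = (Suc x, y - 1)"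
      by fastforce
  qed
qed

lemma card_exactly_one_21_inner_arc:
  assumes cd: "1 \<le> c" "c < d" "d \<le> 2 * m + 2"
  shows "card {M \<in> matchings (Suc m). (c, d) \<in> M \<and> (c - 1, d + 1) \<in> M \<and> exactly_one_21 M} =
    card {N \<in> matchings m. (c - 1, d - 1) \<in> N \<and> avoids_21 N}"
  unfolding card_matchings_with_arc[OF cd]
  using exactly_one_21_insert_nested_arcI[OF _ cd] exactly_one_21_insert_nested_arcD[OF _ cd]
  by (metis (no_types, lifting))

lemma card_shifted_arcs:
  assumes N: "N \<in> matchings m"
  shows "card {p \<in> {(c, d). 1 \<le> c \<and> c < d \<and> d \<le> 2 * Suc m}. case p of (c, d) \<Rightarrow> (c - 1, d - 1) \<in> N} = m"
    (is "card ?S = m")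
proof -
  have "?S = map_prod Suc Suc ` N"
  proof (intro equalityI subsetI)
    fix p assume "p \<in> ?S"
    then obtain c d where p: "p = (c, d)" "(c - 1, d - 1) \<in> N"
      by auto
    moreover from this have "c = Suc (c - 1)" "d = Suc (d - 1)"
      using matching_arc_bounds[OF N p(2)] by auto
    ultimately show "p \<in> map_prod Suc Suc ` N"
      by (metis map_prod_simp rev_image_eqI)
  next
    fix p assume "p \<in> map_prod Suc Suc ` N"
    then obtain a b where ab: "p = (Suc a, Suc b)" "(a, b) \<in> N"
      by auto
    then show "p \<in> ?S"
      using matching_arc_bounds[OF N ab(2)] by auto
  qed
  moreover have "inj_on (map_prod Suc Suc) N"
    by (auto simp: inj_on_def)
  ultimately show ?thesis
    using N unfolding matchings_def by (simp add: card_image)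
qed

lemma a1_Suc: "a1 (Suc m) = m * a0 m"
proof -
  let ?Q = "{(c, d). 1 \<le> c \<and> c < d \<and> d \<le> 2 * Suc m}"
  have "finite ?Q"
    by (rule finite_subset[of _ "{1..2 * m + 2} \<times> {1..2 * m + 2}"]) auto
  have "a1 (Suc m) = (\<Sum>p\<in>?Q. card {M \<in> matchings (Suc m).
      (case p of (c, d) \<Rightarrow> (c, d) \<in> M \<and> (c - 1, d + 1) \<in> M) \<and> exactly_one_21 M})"
    unfolding a1_def
    by (rule card_Collect_eq_sum_unique[OF finite_matchings \<open>finite ?Q\<close> exactly_one_21_inner_arc_unique])
  also have "\<dots> = (\<Sum>(c, d)\<in>?Q. card {N \<in> matchings m. (c - 1, d - 1) \<in> N \<and> avoids_21 N})"
    using card_exactly_one_21_inner_arc by (intro sum.cong refl) (auto simp: conj_assoc)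
  also have "\<dots> = (\<Sum>N\<in>matchings m. card {p \<in> ?Q. case p of (c, d) \<Rightarrow> (c - 1, d - 1) \<in> N \<and> avoids_21 N})"
    using sum_card_Collect_swap[OF \<open>finite ?Q\<close> finite_matchings,
        where R = "\<lambda>p N. case p of (c, d) \<Rightarrow> (c - 1, d - 1) \<in> N \<and> avoids_21 N"]
    by (simp add: case_prod_beta)
  also have "\<dots> = (\<Sum>N\<in>matchings m. if avoids_21 N then m else 0)"
    using card_shifted_arcs by (intro sum.cong refl) (simp add: case_prod_beta)
  also have "\<dots> = m * a0 m"
    unfolding a0_eq_card_avoids_21 by (simp add: sum.If_cases finite_matchings Int_def mult.commute)
  finally show ?thesis .
qed

lemma matchings_1: "matchings 1 = {{(1, 2)}}"
proof -
  have "M = {(1, 2)}" if "M \<in> matchings 1" for M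
  proof -
    have "M \<subseteq> {(1, 2)}"
      using matching_arc_bounds[OF that] by force
    then have "M = {} \<or> M = {(1, 2)}"
      by (rule subset_singletonD)
    moreover have "card M = 1"
      using that unfolding matchings_def by simp
    ultimately show ?thesis
      by auto
  qed
  moreover have "{(1::nat, 2::nat)} \<in> matchings 1"
    unfolding matchings_iff partial_matching_def points_def by auto
  ultimately show ?thesis by blast
qed

theorem corollary2:
  shows "a0 1 = 1 \<and> a0 2 = 2 \<and>
    (\<forall>n::nat. n \<ge> 2 \<longrightarrow> a0 (n + 1) = 2 * n * a0 n + 2 * (n - 1) * a0 (n - 1))"
proof -
  have no_occurrence: "\<not> endhered_21_at {(1, 2)} x y" for x y
    unfolding endhered_21_at_def by auto
  then have "{M \<in> matchings 1. avoids_21 M} = {{(1, 2)}}"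
    unfolding avoids_21_def matchings_1 by auto
  then have a0_1: "a0 1 = 1"
    unfolding a0_eq_card_avoids_21 by simp
  have "a1 1 = 0"
    unfolding a1_def exactly_one_21_def matchings_1 using no_occurrence by simp
  then have a0_2: "a0 2 = 2"
    using a0_Suc[of 1] a0_1 by (simp add: numeral_2_eq_2)
  have "a0 (n + 1) = 2 * n * a0 n + 2 * (n - 1) * a0 (n - 1)" if "n \<ge> 2" for n
    using a0_Suc[of n] a1_Suc[of "n - 1"] that by (simp add: Suc_diff_1)
  with a0_1 a0_2 show ?thesis by blast
qed

end
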